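(* Let $(Z_k,\tilde Z_k)_{k\in\mathbb{N}}$ be given by the iterated one-shot (reflection) coupling of the linear chains described below, with $\Delta z=\tilde z-z\ne0$. Then for every $n\ge1$, \[ \mathbb P(Z_n\ne\tilde Z_n)=2\Phi\Bigl(\frac{1}{2\Theta_n^{1/2}}\Bigr)-1,\qquad \Theta_n=\sum_{k=1}^n\frac{1}{|B_k^{-1}\Pi_k\Delta z|^2},\quad \Pi_k=A_kA_{k-1}\cdots A_1. \]
   Context: Let $A_k,B_k\in\mathbb{R}^{d\times d}$, $k\ge1$, be non-singular, and $z,\tilde z\in\mathbb{R}^d$. Let $(\xi_k)_{k\ge1}$ be iid $\mathcal N(0,I_d)$ and $(U_k)_{k\ge1}$ iid $\mathrm{Unif}(0,1)$, independent of each other. Set $Z_0=z$, $\tilde Z_0=\tilde z$, and inductively for $k\ge1$: $E_k=B_k^{-1}A_k(\tilde Z_{k-1}-Z_{k-1})$, $e_k=E_k/|E_k|$ if $E_k\ne0$ and $e_k=0$ otherwise, $p_k(w)=\exp(-|E_k|^2/2+\langle E_k,w\rangle)$ for $w\in\mathbb{R}^d$, $\tilde\xi_k=\mathbf 1_{\{U_k\le p_k(\xi_k)\}}(\xi_k-E_k)+\mathbf 1_{\{U_k>p_k(\xi_k)\}}(I_d-2e_ke_k^T)\xi_k$, and $Z_k=A_kZ_{k-1}+B_k\xi_k$, $\tilde Z_k=A_k\tilde Z_{k-1}+B_k\tilde\xi_k$. $\Phi$ is the standard normal cumulative distribution function. *)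

theory Defs
  imports "HOL-Probability.Probability"
begin

definition Phi :: "real \<Rightarrow> real" where
  "Phi x = cdf (density lborel std_normal_density) x"

definition std_normal_vec :: "(real ^ 'd) measure" where
  "std_normal_vec = density lborel
     (\<lambda>x. ennreal ((2 * pi) powr (- real CARD('d) / 2) * exp (- (norm x)\<^sup>2 / 2)))"

definition unif01 :: "real measure" where
  "unif01 = uniform_measure lborel {0<..<1}"

fun coupling ::
  "(nat \<Rightarrow> real^'d^'d) \<Rightarrow> (nat \<Rightarrow> real^'d^'d) \<Rightarrow> real^'d \<Rightarrow> real^'d \<Rightarrow>
   (nat \<Rightarrow> real^'d) \<Rightarrow> (nat \<Rightarrow> real) \<Rightarrow> nat \<Rightarrow> (real^'d) \<times> (real^'d)" where
  "coupling A B z zt xi u 0 = (z, zt)"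
| "coupling A B z zt xi u (Suc k) =
     (let (Zp, Ztp) = coupling A B z zt xi u k;
          E = matrix_inv (B (Suc k)) *v (A (Suc k) *v (Ztp - Zp));
          e = (if E = 0 then 0 else (1 / norm E) *\<^sub>R E);
          p = (\<lambda>w. exp (- (norm E)\<^sup>2 / 2 + inner E w));
          x = xi (Suc k);
          xt = (if u (Suc k) \<le> p x then x - E
                else (mat 1 - 2 *\<^sub>R (\<chi> i j. e $ i * e $ j)) *v x)
      in (A (Suc k) *v Zp + B (Suc k) *v x, A (Suc k) *v Ztp + B (Suc k) *v xt))"

fun prodA :: "(nat \<Rightarrow> real^'d^'d) \<Rightarrow> nat \<Rightarrow> real^'d^'d" where
  "prodA A 0 = mat 1"
| "prodA A (Suc k) = A (Suc k) ** prodA A k"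

end

(*
  Every step is affine with the same A_k and B_k for both chains, so the difference
  Ztilde_k - Z_k stays on the line through Pi_k dz: it equals T_k Pi_k dz for a scalar chain
  T with T_0 = 1. With v_k = B_k^-1 Pi_k dz and sigma_k = 1 / |v_k|, the noise enters step k
  only through eta = <v_k / |v_k|, xi_k>, a standard normal variable: from T_{k-1} = t the
  step couples (T_k = 0) with probability min 1 (exp (- a^2 / 2 + a eta)), a = t / sigma_k,
  and otherwise reflects, T_k = t - 2 eta sigma_k.

  By induction on the number of steps, the chain started at t > 0 never couples with
  probability G S t = uncoupled_prob S t = 2 Phi (t / (2 sqrt S)) - 1, where S is the sum
  of the sigma_k^2. The induction step is a single Gaussian integral. The map eta -> a - eta
  exchanges the densities phi eta and phi (eta - a) and makes G S (t - 2 eta sigma) odd, so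
  the coupling part min (phi eta) (phi (eta - a)) integrates to zero; what remains is the
  Gaussian convolution of Phi, which adds sigma^2 to S.
*)

theory Submission
  imports Defs
begin

section \<open>The standard normal and uniform distributions\<close>

interpretation std_normal: prob_space std_normal_distribution
  using prob_space_normal_density by simp

interpretation unif01: prob_space unif01
  unfolding unif01_def by (rule prob_space_uniform_measure) auto

lemma char_distr_std_normal_scaled:
  "char (distr std_normal_distribution borel (\<lambda>x. a * x)) s
    = complex_of_real (exp (- ((a * s)\<^sup>2) / 2))"
proof -
  have "char (distr std_normal_distribution borel (\<lambda>x. a * x)) s
      = char std_normal_distribution (a * s)"
    unfolding char_def by (subst integral_distr) (auto simp: mult_ac)
  then show ?thesis by (simp add: char_std_normal_distribution)
qed

lemma distr_std_normal_pair_lincomb: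
  "distr (std_normal_distribution \<Otimes>\<^sub>M std_normal_distribution) borel (\<lambda>z. c * fst z + b * snd z)
    = distr std_normal_distribution borel (\<lambda>x. sqrt (b\<^sup>2 + c\<^sup>2) * x)"
proof (rule Levy_uniqueness)
  let ?N = std_normal_distribution
  interpret P: pair_prob_space ?N ?N ..
  show "real_distribution (distr (?N \<Otimes>\<^sub>M ?N) borel (\<lambda>z. c * fst z + b * snd z))"
    by (rule P.real_distribution_distr) simp
  show "real_distribution (distr ?N borel (\<lambda>x. sqrt (b\<^sup>2 + c\<^sup>2) * x))"
    by (rule std_normal.real_distribution_distr) simp
  have "char (distr (?N \<Otimes>\<^sub>M ?N) borel (\<lambda>z. c * fst z + b * snd z)) s
      = char (distr ?N borel (\<lambda>x. sqrt (b\<^sup>2 + c\<^sup>2) * x)) s" for s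
  proof -
    have int: "integrable (?N \<Otimes>\<^sub>M ?N) (\<lambda>z. iexp (s * c * fst z) * iexp (s * b * snd z))"
      by (rule P.integrable_const_bound[where B=1]) (auto simp: norm_mult)
    have "char (distr (?N \<Otimes>\<^sub>M ?N) borel (\<lambda>z. c * fst z + b * snd z)) s
        = (\<integral>z. iexp (s * c * fst z) * iexp (s * b * snd z) \<partial>(?N \<Otimes>\<^sub>M ?N))"
      unfolding char_def by (subst integral_distr) (auto simp: algebra_simps exp_add[symmetric])
    also have "\<dots> = (\<integral>x. iexp (s * c * x) * (\<integral>y. iexp (s * b * y) \<partial>?N) \<partial>?N)"
      using P.integral_fst'[OF int] by simp
    also have "\<dots> = char ?N (s * c) * char ?N (s * b)"
      by (simp add: char_def)
    also have "\<dots> = complex_of_real (exp (- ((sqrt (b\<^sup>2 + c\<^sup>2) * s)\<^sup>2) / 2))"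
      by (simp add: char_std_normal_distribution exp_add[symmetric] algebra_simps
          flip: of_real_mult)
    finally show ?thesis by (simp add: char_distr_std_normal_scaled)
  qed
  then show "char (distr (?N \<Otimes>\<^sub>M ?N) borel (\<lambda>z. c * fst z + b * snd z))
      = char (distr ?N borel (\<lambda>x. sqrt (b\<^sup>2 + c\<^sup>2) * x))" ..
qed

lemma distr_std_normal_uminus:
  "distr std_normal_distribution borel uminus = std_normal_distribution"
proof -
  have "distr std_normal_distribution borel (\<lambda>x. (-1) * x)
      = distr std_normal_distribution borel (\<lambda>x. 1 * x)"
    by (intro Levy_uniqueness std_normal.real_distribution_distr ext)
       (simp_all only: char_distr_std_normal_scaled, simp_all)
  then show ?thesis by (simp add: distr_id2)
qed

lemma Phi_eq_measure: "Phi x = measure std_normal_distribution {..x}"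
  by (simp add: Phi_def cdf_def)

lemma Phi_eq_measure_lessThan: "Phi x = measure std_normal_distribution {..<x}"
proof -
  have "measure std_normal_distribution {x} = 0"
    by (simp add: measure_def emeasure_density nn_integral_null_set null_sets_def)
  moreover have "measure std_normal_distribution ({..<x} \<union> {x})
      = measure std_normal_distribution {..<x} + measure std_normal_distribution {x}"
    by (rule std_normal.finite_measure_Union) auto
  moreover have "{..<x} \<union> {x} = {..x}" by auto
  ultimately show ?thesis by (simp add: Phi_eq_measure)
qed

lemma measure_std_normal_greaterThan: "measure std_normal_distribution {x<..} = 1 - Phi x"
  using std_normal.prob_compl[of "{..x}"]
  by (simp add: Phi_eq_measure Compl_eq_Diff_UNIV[symmetric])

lemma Phi_nonneg: "0 \<le> Phi x"
  by (simp add: Phi_eq_measure)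

lemma Phi_le_1: "Phi x \<le> 1"
  by (simp add: Phi_eq_measure)

lemma Phi_mono: "x \<le> y \<Longrightarrow> Phi x \<le> Phi y"
  unfolding Phi_eq_measure by (intro std_normal.finite_measure_mono) auto

lemma borel_measurable_Phi[measurable]: "Phi \<in> borel_measurable borel"
  by (rule borel_measurable_mono) (auto simp: mono_def Phi_mono)

lemma Phi_minus: "Phi (- x) = 1 - Phi x"
proof -
  have "Phi (- x) = measure (distr std_normal_distribution borel uminus) {..- x}"
    by (simp add: distr_std_normal_uminus Phi_eq_measure)
  also have "\<dots> = measure std_normal_distribution {x..}"
    by (subst measure_distr) (auto intro!: arg_cong[where f = "measure _"])
  also have "\<dots> = 1 - measure std_normal_distribution {..<x}"
    using std_normal.prob_compl[of "{..<x}"] by (simp add: Compl_eq_Diff_UNIV[symmetric])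
  finally show ?thesis by (simp add: Phi_eq_measure_lessThan)
qed

lemma integral_Phi_affine:
  assumes "b > 0"
  shows "(\<integral>x. Phi ((t - c * x) / b) \<partial>std_normal_distribution) = Phi (t / sqrt (b\<^sup>2 + c\<^sup>2))"
proof -
  let ?N = std_normal_distribution
  interpret P: pair_prob_space ?N ?N ..
  let ?A = "{z \<in> space (?N \<Otimes>\<^sub>M ?N). c * fst z + b * snd z \<le> t}"
  have A[measurable]: "?A \<in> sets (?N \<Otimes>\<^sub>M ?N)" by measurable
  have sqrt_pos: "sqrt (b\<^sup>2 + c\<^sup>2) > 0" using assms by (simp add: add_pos_nonneg)
  have "Phi (t / sqrt (b\<^sup>2 + c\<^sup>2))
      = measure (distr (?N \<Otimes>\<^sub>M ?N) borel (\<lambda>z. c * fst z + b * snd z)) {..t}"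
    unfolding distr_std_normal_pair_lincomb using sqrt_pos
    by (subst measure_distr)
       (auto simp: Phi_eq_measure field_simps intro!: arg_cong[where f = "measure _"])
  also have "\<dots> = measure (?N \<Otimes>\<^sub>M ?N) ?A"
    by (subst measure_distr) (auto intro!: arg_cong[where f = "measure _"])
  also have "\<dots> = (\<integral>z. indicator ?A z \<partial>(?N \<Otimes>\<^sub>M ?N))"
    using A by simp
  also have "\<dots> = (\<integral>x. (\<integral>y. indicator ?A (x, y) \<partial>?N) \<partial>?N)"
    by (rule P.integral_fst'[symmetric]) (auto intro!: P.integrable_const_bound[where B=1])
  also have "\<dots> = (\<integral>x. Phi ((t - c * x) / b) \<partial>?N)"
  proof (intro Bochner_Integration.integral_cong refl)
    fix x
    have "(\<lambda>y. indicator ?A (x, y) :: real) = indicator {..(t - c * x) / b}"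
      using assms by (auto simp: indicator_def space_pair_measure field_simps)
    then show "(\<integral>y. indicator ?A (x, y) \<partial>?N) = Phi ((t - c * x) / b)"
      by (simp add: Phi_eq_measure)
  qed
  finally show ?thesis ..
qed

lemma space_unif01[simp]: "space unif01 = UNIV"
  by (simp add: unif01_def)

lemma sets_unif01[measurable_cong]: "sets unif01 = sets borel"
  by (simp add: unif01_def)

lemma measure_unif01_greaterThan:
  assumes "p \<ge> 0"
  shows "measure unif01 {p<..} = 1 - min 1 p"
proof -
  have "measure unif01 {p<..} = measure lborel ({0<..<1} \<inter> {p<..})"
    unfolding unif01_def by (subst measure_uniform_measure) auto
  also have "{0<..<1} \<inter> {p<..} = (if p < 1 then {p<..<1} else {})"
    using assms by auto
  finally show ?thesis by simp
qed

lemma sets_std_normal_unif01[measurable_cong]: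
  "sets (std_normal_distribution \<Otimes>\<^sub>M unif01) = sets (borel \<Otimes>\<^sub>M borel)"
  by (intro sets_pair_measure_cong) (simp_all add: unif01_def)

lemma AE_std_normal_unif01_lt_1: "AE y in std_normal_distribution \<Otimes>\<^sub>M unif01. snd y < 1"
proof -
  interpret NU: pair_prob_space std_normal_distribution unif01 ..
  have "AE u in unif01. u < 1"
    unfolding unif01_def by (subst AE_uniform_measure) auto
  then have "AE x in std_normal_distribution. AE u in unif01. snd (x, u) < 1"
    by simp
  then show ?thesis
    by (rule NU.AE_pair_measure[rotated]) measurable
qed

section \<open>Standard Gaussian vectors\<close>

definition std_normal_density_euclidean :: "'a::euclidean_space \<Rightarrow> real" where
  "std_normal_density_euclidean x = (2 * pi) powr (- real DIM('a) / 2) * exp (- (norm x)\<^sup>2 / 2)"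

lemma borel_measurable_std_normal_density_euclidean[measurable]:
  "std_normal_density_euclidean \<in> borel_measurable borel"
  unfolding std_normal_density_euclidean_def by measurable

definition std_normal_euclidean :: "'a::euclidean_space measure" where
  "std_normal_euclidean = density lborel (\<lambda>x. ennreal (std_normal_density_euclidean x))"

lemma std_normal_vec_eq_std_normal_euclidean: "std_normal_vec = std_normal_euclidean"
  by (simp add: std_normal_vec_def std_normal_euclidean_def std_normal_density_euclidean_def)

lemma sets_std_normal_euclidean[measurable_cong]: "sets std_normal_euclidean = sets borel"
  by (simp add: std_normal_euclidean_def)

lemma sets_std_normal_vec[measurable_cong]: "sets std_normal_vec = sets borel"
  by (simp add: std_normal_vec_eq_std_normal_euclidean sets_std_normal_euclidean)

lemma power2_norm_eq_sum_Basis: "(norm x)\<^sup>2 = (\<Sum>b\<in>Basis. (x \<bullet> b)\<^sup>2)"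
  unfolding power2_norm_eq_inner euclidean_inner[of x x] by (simp add: power2_eq_square)

lemma std_normal_density_euclidean_eq_prod:
  "std_normal_density_euclidean (x::'a::euclidean_space) = (\<Prod>b\<in>Basis. std_normal_density (x \<bullet> b))"
proof -
  have "(2 * pi) powr (- real DIM('a) / 2) = ((2 * pi) powr (- (1 / 2))) powr real DIM('a)"
    by (simp add: powr_powr)
  also have "\<dots> = (1 / sqrt (2 * pi)) ^ DIM('a)"
    by (simp add: powr_realpow powr_minus_divide powr_half_sqrt)
  finally have "(2 * pi) powr (- real DIM('a) / 2) = (1 / sqrt (2 * pi)) ^ DIM('a)" .
  moreover have "exp (- (norm x)\<^sup>2 / 2) = (\<Prod>b\<in>Basis. exp (- (x \<bullet> b)\<^sup>2 / 2))"
    by (simp add: power2_norm_eq_sum_Basis sum_divide_distrib exp_sum flip: sum_negf)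
  ultimately show ?thesis
    unfolding std_normal_density_euclidean_def std_normal_density_def
    by (simp only: prod.distrib prod_constant)
qed

lemma integral_std_normal_euclidean_prod:
  fixes h :: "'a::euclidean_space \<Rightarrow> real \<Rightarrow>
    'b::{real_normed_field, banach, second_countable_topology}"
  assumes integrable: "\<And>b. b \<in> Basis \<Longrightarrow> integrable std_normal_distribution (h b)"
  shows "(\<integral>x. (\<Prod>b\<in>Basis. h b (x \<bullet> b)) \<partial>std_normal_euclidean)
    = (\<Prod>b\<in>Basis. \<integral>y. h b y \<partial>std_normal_distribution)"
proof -
  interpret PL: product_sigma_finite "\<lambda>_. lborel :: real measure"
    by (simp add: product_sigma_finite_def lborel.sigma_finite_measure_axioms)
  define g where "g b y = std_normal_density y *\<^sub>R h b y" for b y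
  have [measurable]: "h b \<in> borel_measurable borel" if "b \<in> Basis" for b
    using borel_measurable_integrable[OF integrable[OF that]] by simp
  have g_integrable: "integrable lborel (g b)" if "b \<in> Basis" for b
    using integrable[OF that] that unfolding g_def by (subst (asm) integrable_density) simp_all
  have coordinates: "(\<Sum>b'\<in>Basis. f b' *\<^sub>R b') \<bullet> b = f b" if "b \<in> Basis" for f :: "'a \<Rightarrow> real" and b
    using that by (simp add: inner_sum_left inner_Basis if_distrib cong: if_cong)
  have "(\<integral>x. (\<Prod>b\<in>Basis. h b (x \<bullet> b)) \<partial>std_normal_euclidean)
      = (\<integral>x. std_normal_density_euclidean x *\<^sub>R (\<Prod>b\<in>Basis. h b (x \<bullet> b)) \<partial>lborel)"
    unfolding std_normal_euclidean_def
    by (subst integral_density) (auto simp: std_normal_density_euclidean_def)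
  also have "\<dots> = (\<integral>f. (\<Prod>b\<in>Basis. g b (f b)) \<partial>(\<Pi>\<^sub>M b\<in>(Basis::'a set). lborel))"
    by (subst lborel_eq, subst integral_distr)
       (auto simp: g_def std_normal_density_euclidean_eq_prod coordinates prod.distrib
         scaleR_conv_of_real cong: prod.cong)
  also have "\<dots> = (\<Prod>b\<in>Basis. \<integral>y. g b y \<partial>lborel)"
    by (rule PL.product_integral_prod) (auto intro: g_integrable)
  also have "\<dots> = (\<Prod>b\<in>Basis. \<integral>y. h b y \<partial>std_normal_distribution)"
    by (intro prod.cong refl) (simp add: g_def integral_density)
  finally show ?thesis .
qed

lemma prob_space_std_normal_euclidean:
  "prob_space (std_normal_euclidean :: 'a::euclidean_space measure)"
proof
  have "emeasure std_normal_euclidean (UNIV :: 'a set)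
      = (\<integral>\<^sup>+x. (\<Prod>b\<in>Basis. ennreal (std_normal_density ((x :: 'a) \<bullet> b))) \<partial>lborel)"
    unfolding std_normal_euclidean_def
    by (subst emeasure_density) (auto simp: std_normal_density_euclidean_eq_prod prod_ennreal)
  also have "\<dots> = (\<Prod>b\<in>(Basis :: 'a set). \<integral>\<^sup>+x. ennreal (std_normal_density x) \<partial>lborel)"
    by (rule nn_integral_lborel_prod) auto
  also have "\<dots> = 1"
    using std_normal.emeasure_space_1 by (simp add: emeasure_density)
  finally show "emeasure std_normal_euclidean (space (std_normal_euclidean :: 'a measure)) = 1"
    by (simp add: std_normal_euclidean_def)
qed

lemma distr_inner_std_normal_euclidean:
  fixes w :: "'a::euclidean_space"
  assumes "norm w = 1"
  shows "distr std_normal_euclidean borel (\<lambda>x. w \<bullet> x) = std_normal_distribution"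
proof (rule Levy_uniqueness)
  interpret prob_space "std_normal_euclidean :: 'a measure"
    by (rule prob_space_std_normal_euclidean)
  show "real_distribution (distr std_normal_euclidean borel (\<lambda>x. w \<bullet> x))"
    by (rule real_distribution_distr) simp
  show "real_distribution std_normal_distribution"
    by (rule real_dist_normal_dist)
  have "char (distr std_normal_euclidean borel (\<lambda>x. w \<bullet> x)) s = char std_normal_distribution s"
    for s
  proof -
    have "iexp (s * (w \<bullet> x)) = (\<Prod>b\<in>Basis. iexp (s * (w \<bullet> b) * (x \<bullet> b)))" for x
      by (simp add: euclidean_inner[of w x] sum_distrib_left exp_sum mult_ac flip: of_real_mult)
    then have "char (distr std_normal_euclidean borel (\<lambda>x. w \<bullet> x)) s
        = (\<Prod>b\<in>(Basis :: 'a set). \<integral>y. iexp (s * (w \<bullet> b) * y) \<partial>std_normal_distribution)"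
      unfolding char_def
      by (subst integral_distr) (auto intro!: integral_std_normal_euclidean_prod
          std_normal.integrable_const_bound[where B=1])
    also have "\<dots> = (\<Prod>b\<in>(Basis :: 'a set). char std_normal_distribution (s * (w \<bullet> b)))"
      by (simp add: char_def mult.assoc)
    also have "\<dots> = (\<Prod>b\<in>(Basis :: 'a set). complex_of_real (exp (- (s\<^sup>2 * (w \<bullet> b)\<^sup>2) / 2)))"
      by (simp add: char_std_normal_distribution power_mult_distrib)
    also have "\<dots> = complex_of_real (exp (- (s\<^sup>2 * (\<Sum>b\<in>(Basis :: 'a set). (w \<bullet> b)\<^sup>2)) / 2))"
      by (simp add: exp_sum sum_distrib_left sum_divide_distrib flip: sum_negf)
    also have "(\<Sum>b\<in>(Basis :: 'a set). (w \<bullet> b)\<^sup>2) = 1"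
      using \<open>norm w = 1\<close> by (simp flip: power2_norm_eq_sum_Basis)
    finally show ?thesis
      by (simp add: char_std_normal_distribution)
  qed
  then show "char (distr std_normal_euclidean borel (\<lambda>x. w \<bullet> x)) = char std_normal_distribution" ..
qed

lemma distr_inner_std_normal_vec_unif01:
  fixes w :: "real^'d"
  assumes "norm w = 1"
  shows "distr (std_normal_vec \<Otimes>\<^sub>M unif01) (std_normal_distribution \<Otimes>\<^sub>M unif01)
      (\<lambda>(x, u). (w \<bullet> x, u))
    = std_normal_distribution \<Otimes>\<^sub>M unif01"
proof -
  have "distr (std_normal_vec \<Otimes>\<^sub>M unif01) (std_normal_distribution \<Otimes>\<^sub>M unif01) (\<lambda>(x, u). (w \<bullet> x, u))
      = distr (std_normal_vec \<Otimes>\<^sub>M unif01) (borel \<Otimes>\<^sub>M unif01) (\<lambda>(x, u). (w \<bullet> x, u))"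
    by (rule distr_cong) (auto intro!: sets_pair_measure_cong simp: sets_unif01)
  also have "\<dots> = distr std_normal_vec borel (\<lambda>x. w \<bullet> x) \<Otimes>\<^sub>M distr unif01 unif01 (\<lambda>u. u)"
    by (rule pair_measure_distr[symmetric])
       (simp_all add: unif01.sigma_finite_measure_axioms std_normal_vec_def)
  also have "\<dots> = std_normal_distribution \<Otimes>\<^sub>M unif01"
    using assms
    by (simp add: std_normal_vec_eq_std_normal_euclidean distr_inner_std_normal_euclidean)
  finally show ?thesis .
qed

lemma (in prob_space) projected_noise_iid:
  fixes xi :: "'i \<Rightarrow> 'a \<Rightarrow> real^'d" and U :: "'i \<Rightarrow> 'a \<Rightarrow> real"
  assumes indep: "indep_vars (\<lambda>_. std_normal_vec \<Otimes>\<^sub>M unif01) (\<lambda>k \<omega>. (xi k \<omega>, U k \<omega>)) I"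
    and distr_noise: "\<And>k. k \<in> I \<Longrightarrow> distr M (std_normal_vec \<Otimes>\<^sub>M unif01) (\<lambda>\<omega>. (xi k \<omega>, U k \<omega>))
                                      = std_normal_vec \<Otimes>\<^sub>M unif01"
    and unit: "\<And>k. k \<in> I \<Longrightarrow> norm (w k) = 1"
  shows "indep_vars (\<lambda>_. std_normal_distribution \<Otimes>\<^sub>M unif01) (\<lambda>k \<omega>. (w k \<bullet> xi k \<omega>, U k \<omega>)) I"
    and "k \<in> I \<Longrightarrow> distr M (std_normal_distribution \<Otimes>\<^sub>M unif01) (\<lambda>\<omega>. (w k \<bullet> xi k \<omega>, U k \<omega>))
                     = std_normal_distribution \<Otimes>\<^sub>M unif01"
proof -
  have "indep_vars (\<lambda>_. std_normal_distribution \<Otimes>\<^sub>M unif01)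
      (\<lambda>k \<omega>. (\<lambda>(x, u). (w k \<bullet> x, u)) (xi k \<omega>, U k \<omega>)) I"
    by (rule indep_vars_compose2[OF indep]) measurable
  then show "indep_vars (\<lambda>_. std_normal_distribution \<Otimes>\<^sub>M unif01) (\<lambda>k \<omega>. (w k \<bullet> xi k \<omega>, U k \<omega>)) I"
    by simp
  assume "k \<in> I"
  then have [measurable]: "(\<lambda>\<omega>. (xi k \<omega>, U k \<omega>)) \<in> measurable M (std_normal_vec \<Otimes>\<^sub>M unif01)"
    using indep by (auto simp: indep_vars_def)
  have "distr M (std_normal_distribution \<Otimes>\<^sub>M unif01) (\<lambda>\<omega>. (w k \<bullet> xi k \<omega>, U k \<omega>))
      = distr (distr M (std_normal_vec \<Otimes>\<^sub>M unif01) (\<lambda>\<omega>. (xi k \<omega>, U k \<omega>)))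
          (std_normal_distribution \<Otimes>\<^sub>M unif01) (\<lambda>(x, u). (w k \<bullet> x, u))"
    by (subst distr_distr) (simp_all add: comp_def)
  then show "distr M (std_normal_distribution \<Otimes>\<^sub>M unif01) (\<lambda>\<omega>. (w k \<bullet> xi k \<omega>, U k \<omega>))
      = std_normal_distribution \<Otimes>\<^sub>M unif01"
    using \<open>k \<in> I\<close> by (simp add: distr_noise unit distr_inner_std_normal_vec_unif01)
qed

section \<open>The one-step identity\<close>

text \<open>For \<open>t > 0\<close>, the probability that the scalar chain never couples during steps of total
  variance \<open>S\<close>; no step is left when \<open>S = 0\<close>.\<close>

definition uncoupled_prob :: "real \<Rightarrow> real \<Rightarrow> real" where
  "uncoupled_prob S t = (if S = 0 then sgn t else 2 * Phi (t / (2 * sqrt S)) - 1)"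

lemma uncoupled_prob_minus: "uncoupled_prob S (- t) = - uncoupled_prob S t"
  by (simp add: uncoupled_prob_def Phi_minus)

lemma abs_uncoupled_prob_le_1: "\<bar>uncoupled_prob S t\<bar> \<le> 1"
  using Phi_nonneg[of "t / (2 * sqrt S)"] Phi_le_1[of "t / (2 * sqrt S)"]
  by (auto simp: uncoupled_prob_def sgn_if)

lemma borel_measurable_uncoupled_prob[measurable]: "uncoupled_prob S \<in> borel_measurable borel"
  unfolding uncoupled_prob_def by (cases "S = 0") simp_all

lemma uncoupled_prob_zero_right[simp]: "uncoupled_prob S 0 = 0"
  using Phi_minus[of 0] by (simp add: uncoupled_prob_def)

lemma uncoupled_prob_zero_left: "t > 0 \<Longrightarrow> uncoupled_prob 0 t = 1"
  by (simp add: uncoupled_prob_def)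

lemma integral_uncoupled_prob_shift:
  assumes "\<sigma> > 0" and "S \<ge> 0"
  shows "(\<integral>x. uncoupled_prob S (t - 2 * x * \<sigma>) \<partial>std_normal_distribution)
    = uncoupled_prob (S + \<sigma>\<^sup>2) t"
proof (cases "S = 0")
  case True
  let ?c = "t / (2 * \<sigma>)"
  have "uncoupled_prob S (t - 2 * x * \<sigma>) = indicator {..<?c} x - indicator {?c<..} x" for x
    using True \<open>\<sigma> > 0\<close> by (auto simp: uncoupled_prob_def sgn_if indicator_def field_simps)
  then have "(\<integral>x. uncoupled_prob S (t - 2 * x * \<sigma>) \<partial>std_normal_distribution)
      = (\<integral>x. indicator {..<?c} x - indicator {?c<..} x \<partial>std_normal_distribution)"
    by simp
  also have "\<dots> = measure std_normal_distribution {..<?c} - measure std_normal_distribution {?c<..}"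
    by (subst Bochner_Integration.integral_diff)
       (auto intro!: std_normal.integrable_const_bound[where B=1])
  also have "\<dots> = 2 * Phi ?c - 1"
    by (simp add: Phi_eq_measure_lessThan measure_std_normal_greaterThan)
  finally show ?thesis
    using True \<open>\<sigma> > 0\<close> by (simp add: uncoupled_prob_def)
next
  case False
  then have "S > 0" using \<open>S \<ge> 0\<close> by simp
  have "(\<integral>x. uncoupled_prob S (t - 2 * x * \<sigma>) \<partial>std_normal_distribution)
      = (\<integral>x. 2 * Phi ((t - (2 * \<sigma>) * x) / (2 * sqrt S)) - 1 \<partial>std_normal_distribution)"
    using False by (simp add: uncoupled_prob_def mult_ac)
  also have "\<dots> = 2 * (\<integral>x. Phi ((t - (2 * \<sigma>) * x) / (2 * sqrt S)) \<partial>std_normal_distribution) - 1"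
    by (subst Bochner_Integration.integral_diff)
       (auto intro!: std_normal.integrable_const_bound[where B=1]
             simp: Phi_nonneg Phi_le_1 std_normal.prob_space[simplified])
  also have "\<dots> = 2 * Phi (t / sqrt ((2 * sqrt S)\<^sup>2 + (2 * \<sigma>)\<^sup>2)) - 1"
    using \<open>S > 0\<close> by (subst integral_Phi_affine) auto
  also have "sqrt ((2 * sqrt S)\<^sup>2 + (2 * \<sigma>)\<^sup>2) = 2 * sqrt (S + \<sigma>\<^sup>2)"
  proof -
    have "(2 * sqrt S)\<^sup>2 + (2 * \<sigma>)\<^sup>2 = 2\<^sup>2 * (S + \<sigma>\<^sup>2)"
      using \<open>S \<ge> 0\<close> by (simp add: algebra_simps)
    then show ?thesis by (simp only: real_sqrt_mult real_sqrt_abs abs_numeral)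
  qed
  also have "2 * Phi (t / (2 * sqrt (S + \<sigma>\<^sup>2))) - 1 = uncoupled_prob (S + \<sigma>\<^sup>2) t"
    using \<open>S > 0\<close> by (simp add: uncoupled_prob_def add_nonneg_eq_0_iff)
  finally show ?thesis .
qed

lemma integral_std_normal_min_shift_odd:
  fixes F :: "real \<Rightarrow> real"
  assumes [measurable]: "F \<in> borel_measurable borel"
    and F_bound: "\<And>x. \<bar>F x\<bar> \<le> 1" and F_odd: "\<And>x. F (- x) = - F x"
  shows "(\<integral>x. min 1 (exp (- a\<^sup>2 / 2 + a * x)) * F (a - 2 * x) \<partial>std_normal_distribution) = 0"
proof -
  define h where "h x = min (std_normal_density x) (std_normal_density (x - a)) * F (a - 2 * x)"
    for x
  \<comment> \<open>\<open>x \<mapsto> a - x\<close> swaps the two densities and changes the sign of \<open>F (a - 2 * x)\<close>.\<close>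
  have h_reflect: "h (a - x) = - h x" for x
    using F_odd[of "a - 2 * x"]
    by (simp add: h_def std_normal_density_def min.commute power2_commute algebra_simps)
  have "(\<integral>x. h x \<partial>lborel) = (\<integral>x. h (a - x) \<partial>lborel)"
    using lborel_integral_real_affine[of "-1" h a] by simp
  then have h_integral: "(\<integral>x. h x \<partial>lborel) = 0"
    unfolding h_reflect by simp
  have density: "std_normal_density x * min 1 (exp (- a\<^sup>2 / 2 + a * x))
      = min (std_normal_density x) (std_normal_density (x - a))" for x
  proof -
    have "std_normal_density x * exp (- a\<^sup>2 / 2 + a * x) = std_normal_density (x - a)"
      by (simp add: std_normal_density_def exp_add[symmetric] power2_eq_square algebra_simps)
    then show ?thesis by (subst mult_min_right) simp_all
  qed
  have "(\<integral>x. min 1 (exp (- a\<^sup>2 / 2 + a * x)) * F (a - 2 * x) \<partial>std_normal_distribution)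
      = (\<integral>x. std_normal_density x * (min 1 (exp (- a\<^sup>2 / 2 + a * x)) * F (a - 2 * x)) \<partial>lborel)"
    by (subst integral_density) auto
  also have "\<dots> = (\<integral>x. h x \<partial>lborel)"
    by (simp only: h_def density mult.assoc[symmetric])
  finally show ?thesis
    using h_integral by simp
qed

text \<open>One step of the scalar chain: \<open>\<sigma> = 1 / |v\<^sub>k|\<close>, and the argument \<open>(\<eta>, u)\<close> is the
  projected noise \<open>(\<langle>v\<^sub>k / |v\<^sub>k|, \<xi>\<^sub>k\<rangle>, U\<^sub>k)\<close>.\<close>

definition coupling_step :: "real \<Rightarrow> real \<Rightarrow> real \<times> real \<Rightarrow> real" where
  "coupling_step \<sigma> t = (\<lambda>(\<eta>, u).
     if t = 0 \<or> u \<le> exp (- (t / \<sigma>)\<^sup>2 / 2 + t / \<sigma> * \<eta>) then 0 else t - 2 * \<eta> * \<sigma>)"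

lemma measurable_coupling_step[measurable (raw)]:
  assumes [measurable]: "f \<in> borel_measurable M" "g \<in> measurable M (borel \<Otimes>\<^sub>M borel)"
  shows "(\<lambda>x. coupling_step \<sigma> (f x) (g x)) \<in> borel_measurable M"
  unfolding coupling_step_def case_prod_beta by measurable

lemma coupling_step_zero[simp]: "coupling_step \<sigma> 0 y = 0"
  by (simp add: coupling_step_def case_prod_beta)

lemma coupling_step_nonneg:
  assumes "\<sigma> > 0" "t \<ge> 0" "u < 1"
  shows "coupling_step \<sigma> t (\<eta>, u) \<ge> 0"
proof (cases "t = 0 \<or> u \<le> exp (- (t / \<sigma>)\<^sup>2 / 2 + t / \<sigma> * \<eta>)")
  case False
  then have "- (t / \<sigma>)\<^sup>2 / 2 + t / \<sigma> * \<eta> < 0"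
    using \<open>u < 1\<close> by (metis exp_less_one_iff less_le_not_le order.trans nle_le)
  then have "t / \<sigma> * \<eta> < t / \<sigma> * (t / \<sigma> / 2)"
    by (simp add: power2_eq_square)
  moreover have "t / \<sigma> > 0"
    using False assms by simp
  ultimately have "\<eta> < t / \<sigma> / 2"
    by (metis mult_less_cancel_left_pos)
  then show ?thesis
    using False assms by (simp add: coupling_step_def field_simps)
qed (simp add: coupling_step_def)

lemma integral_uncoupled_prob_coupling_step:
  assumes "\<sigma> > 0" and "S \<ge> 0"
  shows "(\<integral>y. uncoupled_prob S (coupling_step \<sigma> t y) \<partial>(std_normal_distribution \<Otimes>\<^sub>M unif01))
    = uncoupled_prob (S + \<sigma>\<^sup>2) t"
proof (cases "t = 0")
  case False
  interpret NU: pair_prob_space std_normal_distribution unif01 ..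
  define a where "a = t / \<sigma>"
  define p where "p \<eta> = exp (- a\<^sup>2 / 2 + a * \<eta>)" for \<eta>
  have [measurable]: "p \<in> borel_measurable borel"
    unfolding p_def by measurable
  have shift: "\<And>\<eta>. t - 2 * \<eta> * \<sigma> = \<sigma> * (a - 2 * \<eta>)"
    using assms by (simp add: a_def field_simps)
  have "(\<integral>u. uncoupled_prob S (coupling_step \<sigma> t (\<eta>, u)) \<partial>unif01)
      = (1 - min 1 (p \<eta>)) * uncoupled_prob S (t - 2 * \<eta> * \<sigma>)" for \<eta>
  proof -
    have "(\<integral>u. uncoupled_prob S (coupling_step \<sigma> t (\<eta>, u)) \<partial>unif01)
        = (\<integral>u. uncoupled_prob S (t - 2 * \<eta> * \<sigma>) * indicator {p \<eta><..} u \<partial>unif01)"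
      using False
      by (intro Bochner_Integration.integral_cong) (auto simp: coupling_step_def p_def a_def)
    then show ?thesis
      by (simp add: measure_unif01_greaterThan p_def less_imp_le)
  qed
  then have "(\<integral>y. uncoupled_prob S (coupling_step \<sigma> t y) \<partial>(std_normal_distribution \<Otimes>\<^sub>M unif01))
      = (\<integral>\<eta>. (1 - min 1 (p \<eta>)) * uncoupled_prob S (t - 2 * \<eta> * \<sigma>) \<partial>std_normal_distribution)"
    by (subst NU.integral_fst'[symmetric])
       (auto intro!: NU.P.integrable_const_bound[where B=1] simp: abs_uncoupled_prob_le_1)
  also have "\<dots> = (\<integral>\<eta>. uncoupled_prob S (t - 2 * \<eta> * \<sigma>) \<partial>std_normal_distribution)
      - (\<integral>\<eta>. min 1 (p \<eta>) * uncoupled_prob S (t - 2 * \<eta> * \<sigma>) \<partial>std_normal_distribution)"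
    by (subst Bochner_Integration.integral_diff[symmetric])
       (auto intro!: std_normal.integrable_const_bound[where B=1]
         simp: left_diff_distrib abs_uncoupled_prob_le_1 abs_mult p_def mult_le_one)
  also have "(\<integral>\<eta>. min 1 (p \<eta>) * uncoupled_prob S (t - 2 * \<eta> * \<sigma>) \<partial>std_normal_distribution) = 0"
    unfolding p_def shift
    by (rule integral_std_normal_min_shift_odd)
       (auto simp: abs_uncoupled_prob_le_1 simp flip: uncoupled_prob_minus)
  finally show ?thesis
    using assms by (simp add: integral_uncoupled_prob_shift)
qed simp

section \<open>Conditioning on one member of an independent family\<close>

lemma (in prob_space) prob_indep_var_eq_integral:
  assumes indep: "indep_var S X T W"
    and [measurable]: "Measurable.pred (S \<Otimes>\<^sub>M T) P"
  shows "prob {\<omega> \<in> space M. P (X \<omega>, W \<omega>)} = (\<integral>x. prob {\<omega> \<in> space M. P (x, W \<omega>)} \<partial>distr M S X)"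
proof -
  have [measurable]: "X \<in> measurable M S" "W \<in> measurable M T"
    using indep by (auto dest: indep_var_rv1 indep_var_rv2)
  then have XW_space: "X \<omega> \<in> space S" "W \<omega> \<in> space T" if "\<omega> \<in> space M" for \<omega>
    using that by (auto intro: measurable_space)
  interpret DX: prob_space "distr M S X" by (rule prob_space_distr) simp
  interpret DW: prob_space "distr M T W" by (rule prob_space_distr) simp
  interpret D: pair_prob_space "distr M S X" "distr M T W" ..
  let ?H = "{p \<in> space (S \<Otimes>\<^sub>M T). P p}"
  have "prob {\<omega> \<in> space M. P (X \<omega>, W \<omega>)} = measure (distr M (S \<Otimes>\<^sub>M T) (\<lambda>\<omega>. (X \<omega>, W \<omega>))) ?H"
    by (subst measure_distr)
       (auto intro!: arg_cong[where f = prob] simp: space_pair_measure XW_space)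
  also have "\<dots> = measure (distr M S X \<Otimes>\<^sub>M distr M T W) ?H"
    using indep by (simp add: indep_var_distribution_eq)
  also have "\<dots> = (\<integral>p. indicator ?H p \<partial>(distr M S X \<Otimes>\<^sub>M distr M T W))"
    by (simp add: Int_absorb2)
  also have "\<dots> = (\<integral>x. (\<integral>w. indicator ?H (x, w) \<partial>distr M T W) \<partial>distr M S X)"
    by (rule D.integral_fst'[symmetric]) (auto intro!: D.P.integrable_const_bound[where B=1])
  also have "\<dots> = (\<integral>x. prob {\<omega> \<in> space M. P (x, W \<omega>)} \<partial>distr M S X)"
  proof (intro Bochner_Integration.integral_cong refl)
    fix x assume "x \<in> space (distr M S X)"
    then have x: "x \<in> space S" by simp
    then have [measurable]: "Measurable.pred T (\<lambda>w. P (x, w))"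
      by measurable
    have indicator_slice:
      "(\<lambda>w. indicator ?H (x, w)) = (indicator {w \<in> space T. P (x, w)} :: _ \<Rightarrow> real)"
      using x by (auto simp: indicator_def space_pair_measure)
    have "(\<integral>w. indicator ?H (x, w) \<partial>distr M T W)
        = measure (distr M T W) ({w \<in> space T. P (x, w)} \<inter> space (distr M T W))"
      unfolding indicator_slice by (rule Bochner_Integration.integral_indicator)
    also have "\<dots> = measure (distr M T W) {w \<in> space T. P (x, w)}"
      by (simp add: Int_absorb2)
    also have "\<dots> = prob (W -` {w \<in> space T. P (x, w)} \<inter> space M)"
      by (rule measure_distr; measurable)
    also have "W -` {w \<in> space T. P (x, w)} \<inter> space M = {\<omega> \<in> space M. P (x, W \<omega>)}"
      using XW_space by auto
    finally show "(\<integral>w. indicator ?H (x, w) \<partial>distr M T W) = prob {\<omega> \<in> space M. P (x, W \<omega>)}" .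
  qed
  finally show ?thesis .
qed

lemma (in prob_space) prob_indep_component_eq_integral:
  assumes indep: "indep_vars (\<lambda>_. N) Y I" and "i \<in> I" "K \<subseteq> I" "i \<notin> K"
    and distr_Y: "distr M N (Y i) = N"
    and [measurable]: "Measurable.pred (N \<Otimes>\<^sub>M PiM K (\<lambda>_. N)) P"
  shows "prob {\<omega> \<in> space M. P (Y i \<omega>, restrict (\<lambda>k. Y k \<omega>) K)}
      = (\<integral>y. prob {\<omega> \<in> space M. P (y, restrict (\<lambda>k. Y k \<omega>) K)} \<partial>N)"
    and "(\<lambda>y. prob {\<omega> \<in> space M. P (y, restrict (\<lambda>k. Y k \<omega>) K)}) \<in> borel_measurable N"
proof -
  let ?X = "\<lambda>\<omega>. restrict (\<lambda>k. Y k \<omega>) {i}" and ?W = "\<lambda>\<omega>. restrict (\<lambda>k. Y k \<omega>) K"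
  have [measurable]: "Y i \<in> measurable M N" "\<And>k. k \<in> K \<Longrightarrow> Y k \<in> measurable M N"
    using indep assms(2,3) by (auto simp: indep_vars_def)
  interpret N: prob_space N
    using distr_Y prob_space_distr[of "Y i" N] by simp
  interpret PN: product_sigma_finite "\<lambda>_. N"
    by (simp add: product_sigma_finite_def N.sigma_finite_measure_axioms)
  have indep_XW: "indep_var (PiM {i} (\<lambda>_. N)) ?X (PiM K (\<lambda>_. N)) ?W"
    using assms by (intro indep_var_restrict[OF indep]) auto
  have "?X = (\<lambda>x. \<lambda>k\<in>{i}. x) \<circ> Y i"
    by (auto simp: fun_eq_iff)
  then have "distr M (PiM {i} (\<lambda>_. N)) ?X
      = distr (distr M N (Y i)) (PiM {i} (\<lambda>_. N)) (\<lambda>x. \<lambda>k\<in>{i}. x)"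
    by (simp only:) (rule distr_distr[symmetric]; measurable)
  then have distr_X: "distr M (PiM {i} (\<lambda>_. N)) ?X = PiM {i} (\<lambda>_. N)"
    by (simp add: distr_Y PN.distr_component)
  have [measurable]: "Measurable.pred (PiM {i} (\<lambda>_. N) \<Otimes>\<^sub>M PiM K (\<lambda>_. N)) (\<lambda>(f, w). P (f i, w))"
    by measurable
  have "prob {\<omega> \<in> space M. P (Y i \<omega>, ?W \<omega>)}
      = prob {\<omega> \<in> space M. (\<lambda>(f, w). P (f i, w)) (?X \<omega>, ?W \<omega>)}"
    by simp
  also have "\<dots> = (\<integral>f. prob {\<omega> \<in> space M. P (f i, ?W \<omega>)} \<partial>PiM {i} (\<lambda>_. N))"
    by (subst prob_indep_var_eq_integral[OF indep_XW]) (simp_all add: distr_X)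
  also have "\<dots> = (\<integral>y. prob {\<omega> \<in> space M. P (y, ?W \<omega>)} \<partial>N)"
  proof -
    have "(\<lambda>f. prob {\<omega> \<in> space M. P (f i, ?W \<omega>)}) \<in> borel_measurable (PiM {i} (\<lambda>_. N))"
      by measurable
    then show ?thesis
      by (subst PN.distr_component[symmetric]) (subst integral_distr; simp)
  qed
  finally show "prob {\<omega> \<in> space M. P (Y i \<omega>, ?W \<omega>)} = (\<integral>y. prob {\<omega> \<in> space M. P (y, ?W \<omega>)} \<partial>N)" .
  show "(\<lambda>y. prob {\<omega> \<in> space M. P (y, ?W \<omega>)}) \<in> borel_measurable N"
    by measurable
qed

section \<open>The scalar coupling chain\<close>

text \<open>\<open>coupling_chain \<sigma> j m t y\<close> starts from \<open>t\<close> at time \<open>j\<close> and performs \<open>m\<close> steps,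
  consuming \<open>y (j + 1), \<dots>, y (j + m)\<close>.\<close>

fun coupling_chain :: "(nat \<Rightarrow> real) \<Rightarrow> nat \<Rightarrow> nat \<Rightarrow> real \<Rightarrow> (nat \<Rightarrow> real \<times> real) \<Rightarrow> real" where
  "coupling_chain \<sigma> j 0 t y = t"
| "coupling_chain \<sigma> j (Suc m) t y
     = coupling_chain \<sigma> (Suc j) m (coupling_step (\<sigma> (Suc j)) t (y (Suc j))) y"

lemma coupling_chain_Suc_last:
  "coupling_chain \<sigma> j (Suc m) t y
    = coupling_step (\<sigma> (Suc (j + m))) (coupling_chain \<sigma> j m t y) (y (Suc (j + m)))"
  by (induction m arbitrary: j t) auto

lemma coupling_chain_cong:
  "(\<And>i. i > j \<Longrightarrow> y i = y' i) \<Longrightarrow> coupling_chain \<sigma> j m t y = coupling_chain \<sigma> j m t y'"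
proof (induction m arbitrary: j t)
  case (Suc m)
  then show ?case
    using Suc.IH[of "Suc j"] by simp
qed simp

lemma measurable_coupling_chain:
  assumes "{Suc j..} \<subseteq> K"
    and "f \<in> borel_measurable N" "g \<in> measurable N (PiM K (\<lambda>_. std_normal_distribution \<Otimes>\<^sub>M unif01))"
  shows "(\<lambda>x. coupling_chain \<sigma> j m (f x) (g x)) \<in> borel_measurable N"
  using assms
proof (induction m arbitrary: j f)
  case (Suc m)
  note [measurable] = Suc.prems(2,3)
  have [measurable]: "Suc j \<in> K"
    using Suc.prems(1) by auto
  have "(\<lambda>x. g x (Suc j)) \<in> measurable N (std_normal_distribution \<Otimes>\<^sub>M unif01)"
    by measurable
  then have [measurable]: "(\<lambda>x. g x (Suc j)) \<in> measurable N (borel \<Otimes>\<^sub>M borel)"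
    by (simp add: measurable_cong_sets[OF refl sets_std_normal_unif01])
  have "(\<lambda>x. coupling_step (\<sigma> (Suc j)) (f x) (g x (Suc j))) \<in> borel_measurable N"
    by measurable
  then have "(\<lambda>x. coupling_chain \<sigma> (Suc j) m (coupling_step (\<sigma> (Suc j)) (f x) (g x (Suc j))) (g x))
      \<in> borel_measurable N"
    using Suc.prems(1,3) by (intro Suc.IH) auto
  then show ?case
    by simp
qed simp

lemma (in prob_space) prob_coupling_chain_nonzero:
  fixes Y :: "nat \<Rightarrow> 'a \<Rightarrow> real \<times> real"
  assumes indep: "indep_vars (\<lambda>_. std_normal_distribution \<Otimes>\<^sub>M unif01) Y {1..}"
    and distr_Y: "\<And>k. k \<ge> 1 \<Longrightarrow> distr M (std_normal_distribution \<Otimes>\<^sub>M unif01) (Y k)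
                                    = std_normal_distribution \<Otimes>\<^sub>M unif01"
    and \<sigma>_pos: "\<And>k. k \<ge> 1 \<Longrightarrow> \<sigma> k > 0"
    and "t \<ge> 0"
  shows "prob {\<omega> \<in> space M. coupling_chain \<sigma> j m t (\<lambda>k. Y k \<omega>) \<noteq> 0}
    = uncoupled_prob (\<Sum>k = Suc j..j + m. (\<sigma> k)\<^sup>2) t"
  using \<open>t \<ge> 0\<close>
proof (induction m arbitrary: j t)
  case 0
  then show ?case
    by (cases "t = 0") (simp_all add: uncoupled_prob_zero_left prob_space)
next
  case (Suc m)
  let ?NU = "std_normal_distribution \<Otimes>\<^sub>M unif01"
  define K where "K = {Suc (Suc j)..}"
  define W where "W \<omega> = restrict (\<lambda>i. Y i \<omega>) K" for \<omega>
  define S where "S = (\<Sum>k = Suc (Suc j)..Suc j + m. (\<sigma> k)\<^sup>2)"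
  define rest where "rest y w = coupling_chain \<sigma> (Suc j) m (coupling_step (\<sigma> (Suc j)) t y) w"
    for y w
  have [measurable]: "Y i \<in> measurable M ?NU" if "i \<ge> 1" for i
    using indep that by (auto simp: indep_vars_def)
  have "(\<lambda>p. rest (fst p) (snd p)) \<in> borel_measurable (?NU \<Otimes>\<^sub>M PiM K (\<lambda>_. ?NU))"
    unfolding rest_def by (rule measurable_coupling_chain) (auto simp: K_def)
  then have rest_measurable:
    "Measurable.pred (?NU \<Otimes>\<^sub>M PiM K (\<lambda>_. ?NU)) (\<lambda>p. rest (fst p) (snd p) \<noteq> 0)"
    by measurable
  note conditioning = prob_indep_component_eq_integral[where i = "Suc j" and K = K,
      OF indep _ _ _ _ rest_measurable, simplified, folded W_def]
  have "prob {\<omega> \<in> space M. coupling_chain \<sigma> j (Suc m) t (\<lambda>k. Y k \<omega>) \<noteq> 0}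
      = prob {\<omega> \<in> space M. rest (Y (Suc j) \<omega>) (W \<omega>) \<noteq> 0}"
    by (simp add: rest_def W_def K_def cong: coupling_chain_cong)
  also have "\<dots> = (\<integral>y. prob {\<omega> \<in> space M. rest y (W \<omega>) \<noteq> 0} \<partial>?NU)"
    by (rule conditioning(1)) (simp_all add: K_def distr_Y)
  also have "\<dots> = (\<integral>y. uncoupled_prob S (coupling_step (\<sigma> (Suc j)) t y) \<partial>?NU)"
  proof (rule integral_cong_AE)
    show "(\<lambda>y. prob {\<omega> \<in> space M. rest y (W \<omega>) \<noteq> 0}) \<in> borel_measurable ?NU"
      by (rule conditioning(2)) (simp_all add: K_def distr_Y)
    \<comment> \<open>\<open>U < 1\<close> almost surely, so a rejected step keeps the chain positive and the
      induction hypothesis applies.\<close>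
    show "AE y in ?NU. prob {\<omega> \<in> space M. rest y (W \<omega>) \<noteq> 0}
        = uncoupled_prob S (coupling_step (\<sigma> (Suc j)) t y)"
      using AE_std_normal_unif01_lt_1
    proof eventually_elim
      case (elim y)
      then have "coupling_step (\<sigma> (Suc j)) t y \<ge> 0"
        using coupling_step_nonneg[of "\<sigma> (Suc j)" t "snd y" "fst y"] \<sigma>_pos Suc.prems by simp
      then show ?case
        using Suc.IH[of "coupling_step (\<sigma> (Suc j)) t y" "Suc j"]
        by (simp add: rest_def W_def K_def S_def cong: coupling_chain_cong)
    qed
  qed measurable
  also have "\<dots> = uncoupled_prob (S + (\<sigma> (Suc j))\<^sup>2) t"
    using \<sigma>_pos by (intro integral_uncoupled_prob_coupling_step) (simp_all add: S_def sum_nonneg)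
  also have "S + (\<sigma> (Suc j))\<^sup>2 = (\<Sum>k = Suc j..j + Suc m. (\<sigma> k)\<^sup>2)"
    by (simp add: S_def sum.atLeast_Suc_atMost)
  finally show ?case .
qed

section \<open>Reduction of the coupling to the scalar chain\<close>

lemma matrix_vector_mul_matrix_inv:
  fixes A :: "'a::field^'n^'n"
  assumes "invertible A"
  shows "A *v (matrix_inv A *v x) = x"
proof -
  have "A ** matrix_inv A = mat 1"
    using someI_ex[OF assms[unfolded invertible_def]] by (simp add: matrix_inv_def)
  then show ?thesis
    by (simp add: matrix_vector_mul_assoc)
qed

lemma matrix_inv_mult_vec_nonzero:
  fixes A :: "'a::field^'n^'n"
  assumes "invertible A" and "x \<noteq> 0"
  shows "matrix_inv A *v x \<noteq> 0"
  using matrix_vector_mul_matrix_inv[OF assms(1), of x] assms(2) by auto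

lemma invertible_mult_vec_nonzero:
  fixes A :: "'a::field^'n^'n"
  assumes "invertible A" and "x \<noteq> 0"
  shows "A *v x \<noteq> 0"
  using inj_matrix_vector_mult[OF assms(1)] assms(2) by (metis injD matrix_vector_mult_0_right)

lemma invertible_prodA:
  assumes "\<And>k. k \<ge> 1 \<Longrightarrow> invertible (A k)"
  shows "invertible (prodA A k)"
proof (induction k)
  case 0
  show ?case
    unfolding invertible_def by (intro exI[of _ "mat 1"]) simp
next
  case (Suc k)
  then show ?case
    using assms[of "Suc k"] by (simp add: invertible_mult)
qed

lemma householder_mult_vec:
  "(mat 1 - 2 *\<^sub>R (\<chi> i j. e $ i * e $ j)) *v x = x - (2 * (e \<bullet> x)) *\<^sub>R (e :: real^'n)"
proof -
  have "(\<chi> i j. e $ i * e $ j) *v x = (e \<bullet> x) *\<^sub>R e"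
    by (simp add: vec_eq_iff matrix_vector_mult_def inner_vec_def sum_distrib_left mult_ac)
  then show ?thesis
    by (simp add: matrix_vector_mult_diff_rdistrib scaleR_matrix_vector_assoc[symmetric])
qed

lemma coupled_noise_diff:
  fixes V x :: "real^'n" and T u :: real
  assumes "V \<noteq> 0"
  defines "E \<equiv> T *\<^sub>R V"
  defines "e \<equiv> if E = 0 then 0 else (1 / norm E) *\<^sub>R E"
  shows "(if u \<le> exp (- (norm E)\<^sup>2 / 2 + E \<bullet> x) then x - E
          else (mat 1 - 2 *\<^sub>R (\<chi> i j. e $ i * e $ j)) *v x) - x
    = (coupling_step (1 / norm V) T ((1 / norm V) *\<^sub>R V \<bullet> x, u) - T) *\<^sub>R V"
proof (cases "T = 0")
  case False
  have accept_iff: "- (T / (1 / norm V))\<^sup>2 / 2 + T / (1 / norm V) * ((1 / norm V) *\<^sub>R V \<bullet> x)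
      = - (norm E)\<^sup>2 / 2 + E \<bullet> x"
    using assms by (simp add: E_def power_mult_distrib)
  have reflection: "(2 * (e \<bullet> x)) *\<^sub>R e = (2 * (V \<bullet> x) / (norm V)\<^sup>2) *\<^sub>R V"
    using False assms by (simp add: e_def E_def power2_eq_square field_simps)
  have step: "coupling_step (1 / norm V) T ((1 / norm V) *\<^sub>R V \<bullet> x, u)
      = (if u \<le> exp (- (norm E)\<^sup>2 / 2 + E \<bullet> x) then 0 else T - 2 * (V \<bullet> x) / (norm V)\<^sup>2)"
    using False by (simp only: coupling_step_def accept_iff case_prod_conv)
       (simp add: power2_eq_square)
  show ?thesis
    unfolding step householder_mult_vec reflection by (simp add: E_def algebra_simps)
qed (unfold householder_mult_vec, simp add: E_def e_def coupling_step_def)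

lemma coupling_diff_eq_coupling_chain:
  fixes A B :: "nat \<Rightarrow> real^'d^'d" and z zt :: "real^'d"
  assumes invA: "\<And>k. k \<ge> 1 \<Longrightarrow> invertible (A k)"
    and invB: "\<And>k. k \<ge> 1 \<Longrightarrow> invertible (B k)"
    and "zt - z \<noteq> 0"
  defines "v \<equiv> \<lambda>k. matrix_inv (B k) *v (prodA A k *v (zt - z))"
  shows "snd (coupling A B z zt xi u k) - fst (coupling A B z zt xi u k)
    = coupling_chain (\<lambda>k. 1 / norm (v k)) 0 k 1 (\<lambda>k. ((1 / norm (v k)) *\<^sub>R v k \<bullet> xi k, u k))
        *\<^sub>R (prodA A k *v (zt - z))"
proof (induction k)
  case (Suc k)
  define T where
    "T = coupling_chain (\<lambda>k. 1 / norm (v k)) 0 k 1 (\<lambda>k. ((1 / norm (v k)) *\<^sub>R v k \<bullet> xi k, u k))"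
  define V where "V = v (Suc k)"
  define P where "P = prodA A (Suc k) *v (zt - z)"
  obtain Zp Ztp where prev: "coupling A B z zt xi u k = (Zp, Ztp)"
    by fastforce
  have BV: "B (Suc k) *v V = P"
    unfolding V_def v_def P_def by (rule matrix_vector_mul_matrix_inv[OF invB]) simp
  have "invertible (prodA A (Suc k))"
    using invA by (rule invertible_prodA)
  then have "P \<noteq> 0"
    using \<open>zt - z \<noteq> 0\<close> by (simp add: P_def invertible_mult_vec_nonzero)
  then have "V \<noteq> 0"
    using BV by auto
  have AD: "A (Suc k) *v (Ztp - Zp) = T *\<^sub>R P"
    using Suc.IH by (simp add: prev T_def P_def matrix_vector_mult_scaleR matrix_vector_mul_assoc)
  then have E: "matrix_inv (B (Suc k)) *v (A (Suc k) *v (Ztp - Zp)) = T *\<^sub>R V"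
    by (simp add: V_def v_def P_def matrix_vector_mult_scaleR)
  define x where "x = xi (Suc k)"
  define E where "E = T *\<^sub>R V"
  define e where "e = (if E = 0 then 0 else (1 / norm E) *\<^sub>R E)"
  define xt where "xt = (if u (Suc k) \<le> exp (- (norm E)\<^sup>2 / 2 + E \<bullet> x) then x - E
      else (mat 1 - 2 *\<^sub>R (\<chi> i j. e $ i * e $ j)) *v x)"
  have "coupling A B z zt xi u (Suc k)
      = (A (Suc k) *v Zp + B (Suc k) *v x, A (Suc k) *v Ztp + B (Suc k) *v xt)"
    unfolding xt_def e_def E_def x_def by (simp only: coupling.simps(2) prev E Let_def prod.case)
  then have "snd (coupling A B z zt xi u (Suc k)) - fst (coupling A B z zt xi u (Suc k))
      = A (Suc k) *v (Ztp - Zp) + B (Suc k) *v (xt - x)"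
    by (simp add: matrix_vector_mult_diff_distrib)
  also have "\<dots> = A (Suc k) *v (Ztp - Zp)
      + B (Suc k) *v ((coupling_step (1 / norm V) T ((1 / norm V) *\<^sub>R V \<bullet> x, u (Suc k)) - T) *\<^sub>R V)"
    unfolding xt_def e_def E_def by (simp only: coupled_noise_diff[OF \<open>V \<noteq> 0\<close>])
  also have "\<dots> = coupling_step (1 / norm V) T ((1 / norm V) *\<^sub>R V \<bullet> x, u (Suc k)) *\<^sub>R P"
    unfolding AD by (simp add: BV algebra_simps)
  finally show ?case
    unfolding coupling_chain_Suc_last by (simp add: T_def V_def P_def x_def)
qed simp

lemma coupling_neq_iff_coupling_chain:
  fixes A B :: "nat \<Rightarrow> real^'d^'d" and z zt :: "real^'d"
  assumes invA: "\<And>k. k \<ge> 1 \<Longrightarrow> invertible (A k)"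
    and invB: "\<And>k. k \<ge> 1 \<Longrightarrow> invertible (B k)"
    and "zt - z \<noteq> 0"
  defines "v \<equiv> \<lambda>k. matrix_inv (B k) *v (prodA A k *v (zt - z))"
  shows "fst (coupling A B z zt xi u n) \<noteq> snd (coupling A B z zt xi u n)
    \<longleftrightarrow> coupling_chain (\<lambda>k. 1 / norm (v k)) 0 n 1 (\<lambda>k. ((1 / norm (v k)) *\<^sub>R v k \<bullet> xi k, u k)) \<noteq> 0"
proof -
  have "invertible (prodA A n)"
    using invA by (rule invertible_prodA)
  then have "prodA A n *v (zt - z) \<noteq> 0"
    using \<open>zt - z \<noteq> 0\<close> by (rule invertible_mult_vec_nonzero)
  have "fst (coupling A B z zt xi u n) \<noteq> snd (coupling A B z zt xi u n)
      \<longleftrightarrow> snd (coupling A B z zt xi u n) - fst (coupling A B z zt xi u n) \<noteq> 0"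
    by (metis right_minus_eq)
  also have "\<dots> \<longleftrightarrow>
      coupling_chain (\<lambda>k. 1 / norm (v k)) 0 n 1 (\<lambda>k. ((1 / norm (v k)) *\<^sub>R v k \<bullet> xi k, u k))
      *\<^sub>R (prodA A n *v (zt - z)) \<noteq> 0"
    unfolding v_def by (simp only: coupling_diff_eq_coupling_chain[OF invA invB \<open>zt - z \<noteq> 0\<close>])
  finally show ?thesis
    using \<open>prodA A n *v (zt - z) \<noteq> 0\<close> by simp
qed

theorem mainTheorem15:
  fixes M :: "'w measure"
    and A B :: "nat \<Rightarrow> real^'d^'d"
    and z zt :: "real^'d"
    and xi :: "nat \<Rightarrow> 'w \<Rightarrow> real^'d"
    and U :: "nat \<Rightarrow> 'w \<Rightarrow> real"
    and n :: nat
  assumes "prob_space M"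
    and "\<And>k. k \<ge> 1 \<Longrightarrow> invertible (A k)"
    and "\<And>k. k \<ge> 1 \<Longrightarrow> invertible (B k)"
    and "prob_space.indep_vars M (\<lambda>_. std_normal_vec \<Otimes>\<^sub>M unif01)
           (\<lambda>k \<omega>. (xi k \<omega>, U k \<omega>)) {1..}"
    and "\<And>k. k \<ge> 1 \<Longrightarrow> distr M (std_normal_vec \<Otimes>\<^sub>M unif01) (\<lambda>\<omega>. (xi k \<omega>, U k \<omega>))
                          = std_normal_vec \<Otimes>\<^sub>M unif01"
    and "zt - z \<noteq> 0"
    and "n \<ge> 1"
  shows "measure M {\<omega> \<in> space M.
            fst (coupling A B z zt (\<lambda>k. xi k \<omega>) (\<lambda>k. U k \<omega>) n)
            \<noteq> snd (coupling A B z zt (\<lambda>k. xi k \<omega>) (\<lambda>k. U k \<omega>) n)}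
         = 2 * Phi (1 / (2 * sqrt (\<Sum>k = 1..n.
               1 / (norm (matrix_inv (B k) *v (prodA A k *v (zt - z))))\<^sup>2))) - 1"
proof -
  interpret prob_space M by fact
  define v where "v k = matrix_inv (B k) *v (prodA A k *v (zt - z))" for k
  define Y where "Y = (\<lambda>k \<omega>. ((1 / norm (v k)) *\<^sub>R v k \<bullet> xi k \<omega>, U k \<omega>))"
  have v_nonzero: "v k \<noteq> 0" if "k \<ge> 1" for k
    using assms(2,3,6) that unfolding v_def
    by (intro matrix_inv_mult_vec_nonzero invertible_mult_vec_nonzero invertible_prodA) auto
  then have "norm ((1 / norm (v k)) *\<^sub>R v k) = 1" if "k \<in> {1..}" for k
    using that by simp
  from projected_noise_iid[OF assms(4) _ this] assms(5)
  have Y_iid: "indep_vars (\<lambda>_. std_normal_distribution \<Otimes>\<^sub>M unif01) Y {1..}"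
      "\<And>k. k \<ge> 1 \<Longrightarrow>
        distr M (std_normal_distribution \<Otimes>\<^sub>M unif01) (Y k) = std_normal_distribution \<Otimes>\<^sub>M unif01"
    unfolding Y_def by auto
  have variance_pos: "(\<Sum>k = 1..n. (1 / norm (v k))\<^sup>2) > 0"
    using v_nonzero assms(7) by (intro sum_pos) auto
  have "prob {\<omega> \<in> space M. fst (coupling A B z zt (\<lambda>k. xi k \<omega>) (\<lambda>k. U k \<omega>) n)
        \<noteq> snd (coupling A B z zt (\<lambda>k. xi k \<omega>) (\<lambda>k. U k \<omega>) n)}
      = prob {\<omega> \<in> space M. coupling_chain (\<lambda>k. 1 / norm (v k)) 0 n 1 (\<lambda>k. Y k \<omega>) \<noteq> 0}"
    by (simp only: coupling_neq_iff_coupling_chain[OF assms(2,3,6)] v_def Y_def)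
  also have "\<dots> = uncoupled_prob (\<Sum>k = 1..n. (1 / norm (v k))\<^sup>2) 1"
    using prob_coupling_chain_nonzero[OF Y_iid, of "\<lambda>k. 1 / norm (v k)" 1 0 n] v_nonzero by simp
  also have "\<dots> = 2 * Phi (1 / (2 * sqrt (\<Sum>k = 1..n. 1 / (norm (v k))\<^sup>2))) - 1"
    using variance_pos by (simp add: uncoupled_prob_def power_one_over)
  finally show ?thesis
    unfolding v_def .
qed

end
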